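(* Let $E$ be a set and $\sigma = (\sigma_I)_{I \in \mathcal{F}(E)}$ a virtual permutation of $E$. Let $x, y \in E$. Then exactly one of the following holds: (a) for every finite $I \subset E$ containing $x$ and $y$, the elements $x$ and $y$ lie in the same cycle of $\sigma_I$; (b) for every finite $I \subset E$ containing $x$ and $y$, the elements $x$ and $y$ lie in different cycles of $\sigma_I$. Moreover, the relation "$x$ and $y$ satisfy (a)" is an equivalence relation on $E$.
   Context: $\mathcal{F}(E)$ denotes the set of finite subsets of $E$, and $\Sigma_I$ the symmetric group of a finite set $I$. For finite $I \subset J$ and a permutation $\tau$ of $J$, "removing the elements of $J\setminus I$ from the cycle structure of $\tau$" produces the permutation $\pi_{J,I}(\tau)$ of $I$ defined by $\pi_{J,I}(\tau)(x) = \tau^m(x)$ where $m \geq 1$ is the smallest integer with $\tau^m(x) \in I$. A virtual permutation of $E$ is a family $(\sigma_I)_{I \in \mathcal{F}(E)}$ with $\sigma_I \in \Sigma_I$ and $\sigma_I = \pi_{J,I}(\sigma_J)$ whenever $I \subset J$ are finite subsets of $E$. *)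

theory Defs
  imports "HOL-Combinatorics.Permutations"
begin

text \<open>For x in I, the result is tau^m(x) with m >= 1 least such that tau^m(x) lies in I;
  outside I the result is the identity (permutations of I are functions fixing
  everything outside I, as in the library predicate permutes).\<close>
definition remove_from_cycles :: "'a set \<Rightarrow> ('a \<Rightarrow> 'a) \<Rightarrow> ('a \<Rightarrow> 'a)" where
  "remove_from_cycles I tau x =
     (if x \<in> I then (tau ^^ (LEAST m. m \<ge> 1 \<and> (tau ^^ m) x \<in> I)) x else x)"

definition virtual_permutation :: "'a set \<Rightarrow> ('a set \<Rightarrow> 'a \<Rightarrow> 'a) \<Rightarrow> bool" where
  "virtual_permutation E sigma \<longleftrightarrow>
     (\<forall>I. finite I \<and> I \<subseteq> E \<longrightarrow> sigma I permutes I) \<and>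
     (\<forall>I J. finite J \<and> J \<subseteq> E \<and> I \<subseteq> J \<longrightarrow> sigma I = remove_from_cycles I (sigma J))"

definition same_cycle :: "('a \<Rightarrow> 'a) \<Rightarrow> 'a \<Rightarrow> 'a \<Rightarrow> bool" where
  "same_cycle p x y \<longleftrightarrow> (\<exists>n. (p ^^ n) x = y)"

end

theory Submission
  imports Defs "HOL-Combinatorics.Cycles" "HOL-Combinatorics.Orbits"
begin

(*
  Removing points from the cycle structure only deletes points from each cycle and never
  reorders the survivors: every iterate of pi_{J,I}(tau) on x is an iterate of tau on x, and
  conversely every tau-iterate of x that lies in I is reached by pi_{J,I}(tau), passing
  through the successive returns to I.  Hence whether x and y share a cycle of sigma_I is the
  same for I and any finite J containing I, so for any two finite I, I' it is the same as
  for I \<union> I'.  Comparing everything inside the single finite set {x, y, z} then reduces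
  reflexivity, symmetry and transitivity to those of "same cycle" for one permutation.
*)

lemma same_cycle_iff_in_orbit:
  assumes "permutation p"
  shows "same_cycle p x y \<longleftrightarrow> y \<in> orbit p x"
  by (simp add: same_cycle_def orbit_altdef_permutation[OF assms] eq_commute)

lemma same_cycle_refl: "same_cycle p x x"
  unfolding same_cycle_def by (rule exI[of _ 0]) simp

lemma same_cycle_sym:
  assumes "permutation p" "same_cycle p x y"
  shows "same_cycle p y x"
proof -
  have "y \<in> orbit p x"
    using assms by (simp add: same_cycle_iff_in_orbit)
  then have "x \<in> orbit p y"
    by (rule orbit_swap[OF permutation_self_in_orbit[OF assms(1)]])
  then show ?thesis
    using assms(1) by (simp add: same_cycle_iff_in_orbit)
qed

lemma same_cycle_trans:
  assumes "same_cycle p x y" "same_cycle p y z"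
  shows "same_cycle p x z"
proof -
  obtain a b where "(p ^^ a) x = y" "(p ^^ b) y = z"
    using assms unfolding same_cycle_def by blast
  then have "(p ^^ (b + a)) x = z" by (simp add: funpow_add)
  then show ?thesis unfolding same_cycle_def by blast
qed

text \<open>The least return time in the definition of remove_from_cycles exists because a
  permutation has finite order.\<close>
lemma remove_from_cycles_first_return:
  assumes "permutation p" "x \<in> I"
  obtains m where "m \<ge> 1" "(p ^^ m) x \<in> I" "remove_from_cycles I p x = (p ^^ m) x"
    "\<And>k. k \<ge> 1 \<Longrightarrow> (p ^^ k) x \<in> I \<Longrightarrow> m \<le> k"
proof -
  obtain N where "p ^^ N = id" "N > 0"
    using permutation_is_nilpotent[OF assms(1)] .
  then have returns: "\<exists>m. m \<ge> 1 \<and> (p ^^ m) x \<in> I"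
    using assms(2) by (intro exI[of _ N]) auto
  define m where "m = (LEAST m. m \<ge> 1 \<and> (p ^^ m) x \<in> I)"
  show thesis
  proof (rule that[of m])
    show "m \<ge> 1" "(p ^^ m) x \<in> I"
      unfolding m_def using LeastI_ex[OF returns] by auto
    show "remove_from_cycles I p x = (p ^^ m) x"
      using assms(2) by (simp add: remove_from_cycles_def m_def)
    show "m \<le> k" if "k \<ge> 1" "(p ^^ k) x \<in> I" for k
      unfolding m_def using that by (auto intro: Least_le)
  qed
qed

lemma remove_from_cycles_funpow_in_orbit:
  assumes "permutation p" "x \<in> I"
  shows "(remove_from_cycles I p ^^ n) x \<in> I \<and> (\<exists>s. (remove_from_cycles I p ^^ n) x = (p ^^ s) x)"
proof (induction n)
  case 0
  show ?case using assms(2) by (auto intro: exI[of _ 0])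
next
  case (Suc n)
  then obtain s where s: "(remove_from_cycles I p ^^ n) x = (p ^^ s) x"
    and in_I: "(remove_from_cycles I p ^^ n) x \<in> I" by blast
  obtain m where "(p ^^ m) ((p ^^ s) x) \<in> I"
    "remove_from_cycles I p ((p ^^ s) x) = (p ^^ m) ((p ^^ s) x)"
    using remove_from_cycles_first_return[OF assms(1) in_I] unfolding s by blast
  moreover have "(p ^^ m) ((p ^^ s) x) = (p ^^ (m + s)) x"
    by (simp add: funpow_add)
  ultimately show ?case
    using s by (auto intro: exI[of _ "m + s"])
qed

lemma remove_from_cycles_reaches_funpow:
  assumes "permutation p" "x \<in> I" "(p ^^ n) x \<in> I"
  shows "\<exists>k. (remove_from_cycles I p ^^ k) x = (p ^^ n) x"
  using assms(2,3)
proof (induction n arbitrary: x rule: less_induct)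
  case (less n)
  show ?case
  proof (cases "n = 0")
    case True
    then show ?thesis by (metis funpow_0)
  next
    case False
    obtain m where m: "m \<ge> 1" "(p ^^ m) x \<in> I" "remove_from_cycles I p x = (p ^^ m) x"
      and "m \<le> n"
      using remove_from_cycles_first_return[OF assms(1) less.prems(1)] False less.prems(2)
      by (metis less_one not_le)
    have rest: "(p ^^ (n - m)) ((p ^^ m) x) = (p ^^ n) x"
      using \<open>m \<le> n\<close> by (simp add: funpow_add[symmetric, THEN fun_cong, simplified])
    obtain k where "(remove_from_cycles I p ^^ k) ((p ^^ m) x) = (p ^^ n) x"
      using less.IH[of "n - m" "(p ^^ m) x"] m(1,2) False rest less.prems(2) by auto
    then have "(remove_from_cycles I p ^^ Suc k) x = (p ^^ n) x"
      using m(3) by (simp add: funpow_Suc_right del: funpow.simps)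
    then show ?thesis by blast
  qed
qed

lemma same_cycle_remove_from_cycles:
  assumes "permutation p" "x \<in> I" "y \<in> I"
  shows "same_cycle (remove_from_cycles I p) x y \<longleftrightarrow> same_cycle p x y"
proof
  assume "same_cycle (remove_from_cycles I p) x y"
  then obtain n where "(remove_from_cycles I p ^^ n) x = y"
    unfolding same_cycle_def by blast
  then show "same_cycle p x y"
    using remove_from_cycles_funpow_in_orbit[OF assms(1,2), of n] unfolding same_cycle_def by metis
next
  assume "same_cycle p x y"
  then obtain n where "(p ^^ n) x = y"
    unfolding same_cycle_def by blast
  then show "same_cycle (remove_from_cycles I p) x y"
    using remove_from_cycles_reaches_funpow[OF assms(1,2), of n] assms(3)
    unfolding same_cycle_def by metis
qed

lemma virtual_permutation_permutes:
  assumes "virtual_permutation E sigma" "finite I" "I \<subseteq> E"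
  shows "sigma I permutes I"
  using assms unfolding virtual_permutation_def by blast

lemma virtual_permutation_permutation:
  assumes "virtual_permutation E sigma" "finite I" "I \<subseteq> E"
  shows "permutation (sigma I)"
  using permutes_imp_permutation[OF assms(2) virtual_permutation_permutes[OF assms]] .

lemma virtual_permutation_same_cycle_mono:
  assumes "virtual_permutation E sigma" "finite J" "J \<subseteq> E" "I \<subseteq> J" "x \<in> I" "y \<in> I"
  shows "same_cycle (sigma I) x y \<longleftrightarrow> same_cycle (sigma J) x y"
proof -
  have "sigma I = remove_from_cycles I (sigma J)"
    using assms(1-4) unfolding virtual_permutation_def by blast
  then show ?thesis
    using same_cycle_remove_from_cycles[OF virtual_permutation_permutation[OF assms(1-3)] assms(5,6)]
    by simp
qed

definition same_virtual_cycle :: "'a set \<Rightarrow> ('a set \<Rightarrow> 'a \<Rightarrow> 'a) \<Rightarrow> 'a \<Rightarrow> 'a \<Rightarrow> bool" where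
  "same_virtual_cycle E sigma x y \<longleftrightarrow>
     (\<forall>I. finite I \<and> I \<subseteq> E \<and> x \<in> I \<and> y \<in> I \<longrightarrow> same_cycle (sigma I) x y)"

lemma same_virtual_cycle_iff:
  assumes "virtual_permutation E sigma" "finite I" "I \<subseteq> E" "x \<in> I" "y \<in> I"
  shows "same_virtual_cycle E sigma x y \<longleftrightarrow> same_cycle (sigma I) x y"
proof -
  have "same_cycle (sigma J) x y \<longleftrightarrow> same_cycle (sigma I) x y"
    if "finite J" "J \<subseteq> E" "x \<in> J" "y \<in> J" for J
  proof -
    have "finite (I \<union> J)" "I \<union> J \<subseteq> E"
      using assms(2,3) that(1,2) by auto
    then have "same_cycle (sigma I) x y \<longleftrightarrow> same_cycle (sigma (I \<union> J)) x y"
      and "same_cycle (sigma J) x y \<longleftrightarrow> same_cycle (sigma (I \<union> J)) x y"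
      using virtual_permutation_same_cycle_mono[OF assms(1)] assms(4,5) that(3,4) by auto
    then show ?thesis
      by simp
  qed
  then show ?thesis
    unfolding same_virtual_cycle_def using assms(2-5) by blast
qed

lemma not_same_virtual_cycle_iff:
  assumes "virtual_permutation E sigma" "finite I" "I \<subseteq> E" "x \<in> I" "y \<in> I"
  shows "(\<forall>J. finite J \<and> J \<subseteq> E \<and> x \<in> J \<and> y \<in> J \<longrightarrow> \<not> same_cycle (sigma J) x y)
           \<longleftrightarrow> \<not> same_virtual_cycle E sigma x y"
  using same_virtual_cycle_iff[OF assms(1)] assms(2-5) by blast

lemma equiv_same_virtual_cycle:
  assumes "virtual_permutation E sigma"
  shows "equiv E {(x, y). x \<in> E \<and> y \<in> E \<and> same_virtual_cycle E sigma x y}"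
proof (rule equivI)
  show "refl_on E {(x, y). x \<in> E \<and> y \<in> E \<and> same_virtual_cycle E sigma x y}"
    by (auto intro!: refl_onI simp: same_virtual_cycle_def same_cycle_refl)
next
  show "sym {(x, y). x \<in> E \<and> y \<in> E \<and> same_virtual_cycle E sigma x y}"
  proof (rule symI)
    fix x y
    assume "(x, y) \<in> {(x, y). x \<in> E \<and> y \<in> E \<and> same_virtual_cycle E sigma x y}"
    then have xy: "x \<in> E" "y \<in> E" and "same_virtual_cycle E sigma x y"
      by auto
    have K: "finite {x, y}" "{x, y} \<subseteq> E" "x \<in> {x, y}" "y \<in> {x, y}"
      using xy by auto
    have "same_cycle (sigma {x, y}) x y"
      using same_virtual_cycle_iff[OF assms K] \<open>same_virtual_cycle E sigma x y\<close> by simp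
    then have "same_cycle (sigma {x, y}) y x"
      by (rule same_cycle_sym[OF virtual_permutation_permutation[OF assms K(1,2)]])
    then show "(y, x) \<in> {(x, y). x \<in> E \<and> y \<in> E \<and> same_virtual_cycle E sigma x y}"
      using same_virtual_cycle_iff[OF assms K(1,2,4,3)] xy by simp
  qed
next
  show "trans {(x, y). x \<in> E \<and> y \<in> E \<and> same_virtual_cycle E sigma x y}"
  proof (rule transI)
    fix x y z
    assume "(x, y) \<in> {(x, y). x \<in> E \<and> y \<in> E \<and> same_virtual_cycle E sigma x y}"
      and "(y, z) \<in> {(x, y). x \<in> E \<and> y \<in> E \<and> same_virtual_cycle E sigma x y}"
    then have xyz: "x \<in> E" "y \<in> E" "z \<in> E"
      and "same_virtual_cycle E sigma x y" "same_virtual_cycle E sigma y z"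
      by auto
    have K: "finite {x, y, z}" "{x, y, z} \<subseteq> E"
      using xyz by auto
    note iff_K = same_virtual_cycle_iff[OF assms K]
    have "same_cycle (sigma {x, y, z}) x y" "same_cycle (sigma {x, y, z}) y z"
      using iff_K \<open>same_virtual_cycle E sigma x y\<close> \<open>same_virtual_cycle E sigma y z\<close>
      by simp_all
    then have "same_cycle (sigma {x, y, z}) x z"
      by (rule same_cycle_trans)
    then show "(x, z) \<in> {(x, y). x \<in> E \<and> y \<in> E \<and> same_virtual_cycle E sigma x y}"
      using iff_K xyz by simp
  qed
qed auto

theorem proposition2p5:
  fixes E :: "'a set" and sigma :: "'a set \<Rightarrow> 'a \<Rightarrow> 'a"
  assumes "virtual_permutation E sigma"
  shows "(\<forall>x\<in>E. \<forall>y\<in>E.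
           ((\<forall>I. finite I \<and> I \<subseteq> E \<and> x \<in> I \<and> y \<in> I \<longrightarrow> same_cycle (sigma I) x y) \<and>
            \<not> (\<forall>I. finite I \<and> I \<subseteq> E \<and> x \<in> I \<and> y \<in> I \<longrightarrow> \<not> same_cycle (sigma I) x y)) \<or>
           (\<not> (\<forall>I. finite I \<and> I \<subseteq> E \<and> x \<in> I \<and> y \<in> I \<longrightarrow> same_cycle (sigma I) x y) \<and>
            (\<forall>I. finite I \<and> I \<subseteq> E \<and> x \<in> I \<and> y \<in> I \<longrightarrow> \<not> same_cycle (sigma I) x y)))
        \<and> equiv E {(x, y). x \<in> E \<and> y \<in> E \<and>
           (\<forall>I. finite I \<and> I \<subseteq> E \<and> x \<in> I \<and> y \<in> I \<longrightarrow> same_cycle (sigma I) x y)}"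
proof -
  have "\<forall>x\<in>E. \<forall>y\<in>E. same_virtual_cycle E sigma x y \<noteq>
          (\<forall>I. finite I \<and> I \<subseteq> E \<and> x \<in> I \<and> y \<in> I \<longrightarrow> \<not> same_cycle (sigma I) x y)"
    using not_same_virtual_cycle_iff[OF assms, of "{_, _}"] by simp
  then show ?thesis
    using equiv_same_virtual_cycle[OF assms]
    unfolding same_virtual_cycle_def by blast
qed

end
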